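(* Let $(Y,D)$ be binary random variables and $X_0,X_1$ observed random vectors. Consider the binary Roy model with $Y_0$ independent of $X_1$ conditionally on $X_0$ and $Y_1$ independent of $X_0$ conditionally on $X_1$. Fix $(x_0,x_1)$ in the support of $(X_0,X_1)$ and define (assumed well defined) $\underline q^0(x_0)=\inf\{\mathbb P(Y=1\mid X_0=x_0,X_1=\tilde x_1):\tilde x_1\in\mathrm{Supp}(X_1\mid X_0=x_0)\}$, $\underline q^1(x_1)=\inf\{\mathbb P(Y=1\mid X_0=\tilde x_0,X_1=x_1):\tilde x_0\in\mathrm{Supp}(X_0\mid X_1=x_1)\}$, $\bar q^0_{10}(x_0)=\sup\{\mathbb P(Y=1,D=0\mid X_0=x_0,X_1=\tilde x_1):\tilde x_1\in\mathrm{Supp}(X_1\mid X_0=x_0)\}$, $\bar q^1_{11}(x_1)=\sup\{\mathbb P(Y=1,D=1\mid X_0=\tilde x_0,X_1=x_1):\tilde x_0\in\mathrm{Supp}(X_0\mid X_1=x_1)\}$. Writing $\pi=\mathbb P(Y=1\mid X_0=x_0,X_1=x_1)$, sharp bounds for the conditional distributions of potential outcomes are $$\frac{\pi-\underline q^0(x_0)}{1-\underline q^0(x_0)}\le \mathbb P(Y_1=1\mid Y_0=0,X_0=x_0,X_1=x_1)\le \frac{\pi-\bar q^0_{10}(x_0)}{1-\bar q^0_{10}(x_0)},$$ $$\frac{\pi-\underline q^1(x_1)}{1-\underline q^1(x_1)}\le \mathbb P(Y_0=1\mid Y_1=0,X_0=x_0,X_1=x_1)\le \frac{\pi-\bar q^1_{11}(x_1)}{1-\bar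 q^1_{11}(x_1)}.$$
   Context: Binary Roy model: $Y_0,Y_1\in\{0,1\}$ unobserved potential outcomes, $Y=Y_1D+Y_0(1-D)$, and almost surely $Y_1>Y_0\Rightarrow D=1$, $Y_1<Y_0\Rightarrow D=0$. $X_d$ are sector-specific covariates entering $Y_d$ but not $Y_{1-d}$. Sharp means the bounds hold for every $(Y_0,Y_1)$ compatible with the model and the conditional distribution of $(Y,D)$ given $(X_0,X_1)$, and the endpoints are attained by such compatible $(Y_0,Y_1)$. Denominators are assumed nonzero. *)

theory Defs
  imports "HOL-Probability.Probability"
begin

text \<open>For every covariate value
  (x0,x1) in the support S of (X0,X1), a structure M gives the conditional joint
  law of the latent triple (Y0, Y1, D) (booleans, True = 1). The observed data
  are the conditional laws obs x0 x1 of (Y, D) given (X0,X1) = (x0,x1).\<close>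

definition roy_outcome :: "bool \<Rightarrow> bool \<Rightarrow> bool \<Rightarrow> bool" where
  "roy_outcome y0 y1 d \<longleftrightarrow> ((y1 \<and> \<not> y0) \<longrightarrow> d) \<and> ((y0 \<and> \<not> y1) \<longrightarrow> \<not> d)"

definition observed :: "bool \<times> bool \<times> bool \<Rightarrow> bool \<times> bool" where
  "observed = (\<lambda>(y0, y1, d). (if d then y1 else y0, d))"

text \<open>M is compatible with the model and with the observed conditional law:
  Roy selection holds almost surely, (Y,D) has the observed conditional law,
  Y0 is independent of X1 given X0, and Y1 is independent of X0 given X1.\<close>
definition compatible ::
  "('a \<times> 'b) set \<Rightarrow> ('a \<Rightarrow> 'b \<Rightarrow> (bool \<times> bool) pmf)
    \<Rightarrow> ('a \<Rightarrow> 'b \<Rightarrow> (bool \<times> bool \<times> bool) pmf) \<Rightarrow> bool" where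
  "compatible S obs M \<longleftrightarrow>
     (\<forall>x0 x1. (x0, x1) \<in> S \<longrightarrow>
        (\<forall>y0 y1 d. (y0, y1, d) \<in> set_pmf (M x0 x1) \<longrightarrow> roy_outcome y0 y1 d))
   \<and> (\<forall>x0 x1. (x0, x1) \<in> S \<longrightarrow> map_pmf observed (M x0 x1) = obs x0 x1)
   \<and> (\<forall>x0 x1 x1'. (x0, x1) \<in> S \<longrightarrow> (x0, x1') \<in> S \<longrightarrow>
        map_pmf fst (M x0 x1) = map_pmf fst (M x0 x1'))
   \<and> (\<forall>x0 x0' x1. (x0, x1) \<in> S \<longrightarrow> (x0', x1) \<in> S \<longrightarrow>
        map_pmf (fst \<circ> snd) (M x0 x1) = map_pmf (fst \<circ> snd) (M x0' x1))"

definition supp1 :: "('a \<times> 'b) set \<Rightarrow> 'a \<Rightarrow> 'b set" where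
  "supp1 S x0 = {x1. (x0, x1) \<in> S}"

definition supp0 :: "('a \<times> 'b) set \<Rightarrow> 'b \<Rightarrow> 'a set" where
  "supp0 S x1 = {x0. (x0, x1) \<in> S}"

definition pY1 :: "('a \<Rightarrow> 'b \<Rightarrow> (bool \<times> bool) pmf) \<Rightarrow> 'a \<Rightarrow> 'b \<Rightarrow> real" where
  "pY1 obs x0 x1 = measure_pmf.prob (obs x0 x1) {(y, d). y}"

definition pY1D0 :: "('a \<Rightarrow> 'b \<Rightarrow> (bool \<times> bool) pmf) \<Rightarrow> 'a \<Rightarrow> 'b \<Rightarrow> real" where
  "pY1D0 obs x0 x1 = measure_pmf.prob (obs x0 x1) {(y, d). y \<and> \<not> d}"

definition pY1D1 :: "('a \<Rightarrow> 'b \<Rightarrow> (bool \<times> bool) pmf) \<Rightarrow> 'a \<Rightarrow> 'b \<Rightarrow> real" where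
  "pY1D1 obs x0 x1 = measure_pmf.prob (obs x0 x1) {(y, d). y \<and> d}"

definition q0_low :: "('a \<times> 'b) set \<Rightarrow> ('a \<Rightarrow> 'b \<Rightarrow> (bool \<times> bool) pmf) \<Rightarrow> 'a \<Rightarrow> real" where
  "q0_low S obs x0 = (INF x1 \<in> supp1 S x0. pY1 obs x0 x1)"

definition q1_low :: "('a \<times> 'b) set \<Rightarrow> ('a \<Rightarrow> 'b \<Rightarrow> (bool \<times> bool) pmf) \<Rightarrow> 'b \<Rightarrow> real" where
  "q1_low S obs x1 = (INF x0 \<in> supp0 S x1. pY1 obs x0 x1)"

definition q0_10_up :: "('a \<times> 'b) set \<Rightarrow> ('a \<Rightarrow> 'b \<Rightarrow> (bool \<times> bool) pmf) \<Rightarrow> 'a \<Rightarrow> real" where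
  "q0_10_up S obs x0 = (SUP x1 \<in> supp1 S x0. pY1D0 obs x0 x1)"

definition q1_11_up :: "('a \<times> 'b) set \<Rightarrow> ('a \<Rightarrow> 'b \<Rightarrow> (bool \<times> bool) pmf) \<Rightarrow> 'b \<Rightarrow> real" where
  "q1_11_up S obs x1 = (SUP x0 \<in> supp0 S x1. pY1D1 obs x0 x1)"

definition pY1_given_Y0_0 ::
  "('a \<Rightarrow> 'b \<Rightarrow> (bool \<times> bool \<times> bool) pmf) \<Rightarrow> 'a \<Rightarrow> 'b \<Rightarrow> real" where
  "pY1_given_Y0_0 M x0 x1 =
     measure_pmf.prob (M x0 x1) {(y0, y1, d). \<not> y0 \<and> y1}
     / measure_pmf.prob (M x0 x1) {(y0, y1, d). \<not> y0}"

definition pY0_given_Y1_0 ::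
  "('a \<Rightarrow> 'b \<Rightarrow> (bool \<times> bool \<times> bool) pmf) \<Rightarrow> 'a \<Rightarrow> 'b \<Rightarrow> real" where
  "pY0_given_Y1_0 M x0 x1 =
     measure_pmf.prob (M x0 x1) {(y0, y1, d). y0 \<and> \<not> y1}
     / measure_pmf.prob (M x0 x1) {(y0, y1, d). \<not> y1}"

end

theory Submission
  imports Defs
begin

text \<open>Under Roy selection the outcome pattern Y0 = 1, Y1 = 0 forces D = 0 and the pattern
  Y0 = 0, Y1 = 1 forces D = 1. Hence P(Y0 = 0, Y1 = 1) = P(Y = 1) - P(Y0 = 1) and
  P(Y = 1, D = 0) \<le> P(Y0 = 1) \<le> P(Y = 1), so P(Y1 = 1 | Y0 = 0) = (\<pi> - p0) / (1 - p0) with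
  p0 = P(Y0 = 1 | x0, x1), which is decreasing in p0. The exclusion restriction makes p0 depend
  on x0 alone, so it lies between the supremum of P(Y = 1, D = 0 | x0, \<cdot>) and the infimum of
  P(Y = 1 | x0, \<cdot>) over the conditional support. Conversely every choice of P(Y0 = 1) and
  P(Y1 = 1) within these per-cell bounds that respects the exclusion restrictions is realised by a
  structure that, given the observed (Y, D), sets the missing potential outcome to 0 when Y = 0
  and draws it from a Bernoulli law when Y = 1; this yields sharpness. The bounds for
  P(Y0 = 1 | Y1 = 0) are symmetric.\<close>

lemma sum_UNIV_bool_prod:
  "(\<Sum>x\<in>UNIV. f x) = (\<Sum>x\<in>UNIV. f (True, x)) + (\<Sum>x\<in>UNIV. f (False, x :: 'a::finite))"
proof -
  have "(\<Sum>x\<in>UNIV. f x) = (\<Sum>b\<in>UNIV. \<Sum>x\<in>UNIV. f (b, x))"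
    by (simp add: sum.cartesian_product)
  then show ?thesis by (simp add: UNIV_bool add.commute)
qed

lemma measure_pmf_prob_finite_UNIV:
  fixes M :: "'a::finite pmf"
  shows "measure_pmf.prob M A = (\<Sum>x\<in>UNIV. if x \<in> A then pmf M x else 0)"
  by (simp add: measure_measure_pmf_finite sum.If_cases)

lemma pmf_bind_finite_UNIV:
  fixes Q :: "'a::finite pmf"
  shows "pmf (bind_pmf Q K) x = (\<Sum>z\<in>UNIV. pmf (K z) x * pmf Q z)"
  unfolding pmf_bind by (rule integral_measure_pmf_real) simp_all

lemmas bool_pmf_enum_simps = measure_pmf_prob_finite_UNIV sum_UNIV_bool_prod UNIV_bool

lemma pmf_bool_eqI:
  fixes p q :: "bool pmf"
  assumes "pmf p True = pmf q True"
  shows "p = q"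
  by (rule pmf_eqI) (metis assms pmf_False_conv_True)

definition prob_Y0 :: "(bool \<times> bool \<times> bool) pmf \<Rightarrow> real" where
  "prob_Y0 M = pmf (map_pmf fst M) True"

definition prob_Y1 :: "(bool \<times> bool \<times> bool) pmf \<Rightarrow> real" where
  "prob_Y1 M = pmf (map_pmf (fst \<circ> snd) M) True"

lemma roy_outcome_excluded:
  assumes "\<forall>y0 y1 d. (y0, y1, d) \<in> set_pmf M \<longrightarrow> roy_outcome y0 y1 d"
  shows "pmf M (False, True, False) = 0" "pmf M (True, False, True) = 0"
  using assms by (auto simp: set_pmf_iff roy_outcome_def)

lemma roy_potential_outcome_probs:
  fixes M :: "(bool \<times> bool \<times> bool) pmf"
  assumes roy: "\<forall>y0 y1 d. (y0, y1, d) \<in> set_pmf M \<longrightarrow> roy_outcome y0 y1 d"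
  defines "Q \<equiv> map_pmf observed M"
  shows "measure_pmf.prob M {(y0, y1, d). \<not> y0 \<and> y1} = measure_pmf.prob Q {(y, d). y} - prob_Y0 M"
    and "measure_pmf.prob M {(y0, y1, d). y0 \<and> \<not> y1} = measure_pmf.prob Q {(y, d). y} - prob_Y1 M"
    and "measure_pmf.prob M {(y0, y1, d). \<not> y0} = 1 - prob_Y0 M"
    and "measure_pmf.prob M {(y0, y1, d). \<not> y1} = 1 - prob_Y1 M"
    and "measure_pmf.prob Q {(y, d). y \<and> \<not> d} \<le> prob_Y0 M" "prob_Y0 M \<le> measure_pmf.prob Q {(y, d). y}"
    and "measure_pmf.prob Q {(y, d). y \<and> d} \<le> prob_Y1 M" "prob_Y1 M \<le> measure_pmf.prob Q {(y, d). y}"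
  using roy_outcome_excluded[OF roy] sum_pmf_eq_1[of UNIV M]
    pmf_nonneg[of M "(True, True, True)"] pmf_nonneg[of M "(True, True, False)"]
    pmf_nonneg[of M "(True, False, False)"] pmf_nonneg[of M "(False, True, True)"]
  by (simp_all add: Q_def prob_Y0_def prob_Y1_def pmf_map observed_def bool_pmf_enum_simps)

definition roy_kernel :: "real \<Rightarrow> real \<Rightarrow> bool \<times> bool \<Rightarrow> (bool \<times> bool \<times> bool) pmf" where
  "roy_kernel \<alpha> \<beta> = (\<lambda>(y, d).
     if \<not> y then return_pmf (False, False, d)
     else if d then map_pmf (\<lambda>y0. (y0, True, True)) (bernoulli_pmf \<beta>)
     else map_pmf (\<lambda>y1. (True, y1, False)) (bernoulli_pmf \<alpha>))"

text \<open>The Bernoulli parameters are solved from P(Y0 = 1) = s0 and P(Y1 = 1) = s1. If a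
  denominator P(Y = 1, D = d) vanishes, the admissible range of s0 resp. s1 is a single point and
  the junk value x / 0 = 0 is harmless.\<close>

definition roy_structure :: "(bool \<times> bool) pmf \<Rightarrow> real \<Rightarrow> real \<Rightarrow> (bool \<times> bool \<times> bool) pmf" where
  "roy_structure Q s0 s1 = bind_pmf Q (roy_kernel
     ((s1 - pmf Q (True, True)) / pmf Q (True, False))
     ((s0 - pmf Q (True, False)) / pmf Q (True, True)))"

lemma roy_structure:
  assumes s0: "measure_pmf.prob Q {(y, d). y \<and> \<not> d} \<le> s0" "s0 \<le> measure_pmf.prob Q {(y, d). y}"
    and s1: "measure_pmf.prob Q {(y, d). y \<and> d} \<le> s1" "s1 \<le> measure_pmf.prob Q {(y, d). y}"
  defines "N \<equiv> roy_structure Q s0 s1"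
  shows "\<forall>y0 y1 d. (y0, y1, d) \<in> set_pmf N \<longrightarrow> roy_outcome y0 y1 d"
    and "map_pmf observed N = Q"
    and "prob_Y0 N = s0"
    and "prob_Y1 N = s1"
proof -
  define a where "a = pmf Q (True, True)"
  define b where "b = pmf Q (True, False)"
  define \<alpha> where "\<alpha> = (s1 - a) / b"
  define \<beta> where "\<beta> = (s0 - b) / a"
  have N: "N = bind_pmf Q (roy_kernel \<alpha> \<beta>)"
    by (simp add: N_def roy_structure_def \<alpha>_def \<beta>_def a_def b_def)
  have bounds: "b \<le> s0" "s0 \<le> a + b" "a \<le> s1" "s1 \<le> a + b"
    using s0 s1 by (simp_all add: a_def b_def bool_pmf_enum_simps)
  have "a \<ge> 0" "b \<ge> 0"
    by (simp_all add: a_def b_def)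
  then have \<alpha>: "0 \<le> \<alpha>" "\<alpha> \<le> 1" "b * \<alpha> = s1 - a" and \<beta>: "0 \<le> \<beta>" "\<beta> \<le> 1" "a * \<beta> = s0 - b"
    using bounds by (auto simp: \<alpha>_def \<beta>_def divide_simps)
  show "\<forall>y0 y1 d. (y0, y1, d) \<in> set_pmf N \<longrightarrow> roy_outcome y0 y1 d"
    by (auto simp: N roy_kernel_def roy_outcome_def split: if_splits)
  have "map_pmf observed (roy_kernel \<alpha> \<beta> z) = return_pmf z" for z
    by (cases z) (auto simp: roy_kernel_def observed_def map_pmf_comp)
  then show "map_pmf observed N = Q"
    by (simp add: N map_bind_pmf bind_return_pmf')
  show "prob_Y0 N = s0"
    using \<beta> by (simp add: N prob_Y0_def map_bind_pmf pmf_bind_finite_UNIV sum_UNIV_bool_prod UNIV_bool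
        roy_kernel_def map_pmf_comp a_def[symmetric] b_def[symmetric] algebra_simps)
  show "prob_Y1 N = s1"
    using \<alpha> by (simp add: N prob_Y1_def map_bind_pmf pmf_bind_finite_UNIV sum_UNIV_bool_prod UNIV_bool
        roy_kernel_def map_pmf_comp a_def[symmetric] b_def[symmetric] algebra_simps)
qed

lemma compatible_roy_outcome:
  "compatible S obs M \<Longrightarrow> (x0, x1) \<in> S \<Longrightarrow>
    \<forall>y0 y1 d. (y0, y1, d) \<in> set_pmf (M x0 x1) \<longrightarrow> roy_outcome y0 y1 d"
  unfolding compatible_def by blast

lemma compatible_observed:
  "compatible S obs M \<Longrightarrow> (x0, x1) \<in> S \<Longrightarrow> map_pmf observed (M x0 x1) = obs x0 x1"
  unfolding compatible_def by blast

lemma compatible_pY1_given_Y0_0: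
  assumes "compatible S obs M" "(x0, x1) \<in> S"
  shows "pY1_given_Y0_0 M x0 x1 = (pY1 obs x0 x1 - prob_Y0 (M x0 x1)) / (1 - prob_Y0 (M x0 x1))"
    and "pY1D0 obs x0 x1 \<le> prob_Y0 (M x0 x1)" "prob_Y0 (M x0 x1) \<le> pY1 obs x0 x1"
  using roy_potential_outcome_probs[OF compatible_roy_outcome[OF assms],
      unfolded compatible_observed[OF assms]]
  by (simp_all add: pY1_given_Y0_0_def pY1_def pY1D0_def)

lemma compatible_pY0_given_Y1_0:
  assumes "compatible S obs M" "(x0, x1) \<in> S"
  shows "pY0_given_Y1_0 M x0 x1 = (pY1 obs x0 x1 - prob_Y1 (M x0 x1)) / (1 - prob_Y1 (M x0 x1))"
    and "pY1D1 obs x0 x1 \<le> prob_Y1 (M x0 x1)" "prob_Y1 (M x0 x1) \<le> pY1 obs x0 x1"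
  using roy_potential_outcome_probs[OF compatible_roy_outcome[OF assms],
      unfolded compatible_observed[OF assms]]
  by (simp_all add: pY0_given_Y1_0_def pY1_def pY1D1_def)

lemma q0_low_le_pY1:
  "x1 \<in> supp1 S x0 \<Longrightarrow> q0_low S obs x0 \<le> pY1 obs x0 x1"
  unfolding q0_low_def pY1_def by (rule cINF_lower) (auto intro: bdd_belowI2[where m = 0])

lemma pY1D0_le_q0_10_up:
  "x1 \<in> supp1 S x0 \<Longrightarrow> pY1D0 obs x0 x1 \<le> q0_10_up S obs x0"
  unfolding q0_10_up_def pY1D0_def by (rule cSUP_upper) (auto intro: bdd_aboveI2)

lemma q1_low_le_pY1:
  "x0 \<in> supp0 S x1 \<Longrightarrow> q1_low S obs x1 \<le> pY1 obs x0 x1"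
  unfolding q1_low_def pY1_def by (rule cINF_lower) (auto intro: bdd_belowI2[where m = 0])

lemma pY1D1_le_q1_11_up:
  "x0 \<in> supp0 S x1 \<Longrightarrow> pY1D1 obs x0 x1 \<le> q1_11_up S obs x1"
  unfolding q1_11_up_def pY1D1_def by (rule cSUP_upper) (auto intro: bdd_aboveI2)

lemma compatible_prob_Y0_eq:
  "compatible S obs M \<Longrightarrow> (x0, x1) \<in> S \<Longrightarrow> (x0, x1') \<in> S \<Longrightarrow>
    prob_Y0 (M x0 x1) = prob_Y0 (M x0 x1')"
  unfolding compatible_def prob_Y0_def by metis

lemma compatible_prob_Y1_eq:
  "compatible S obs M \<Longrightarrow> (x0, x1) \<in> S \<Longrightarrow> (x0', x1) \<in> S \<Longrightarrow>
    prob_Y1 (M x0 x1) = prob_Y1 (M x0' x1)"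
  unfolding compatible_def prob_Y1_def by metis

lemma compatible_prob_Y0_between:
  assumes M: "compatible S obs M" and x: "(x0, x1) \<in> S"
  shows "q0_10_up S obs x0 \<le> prob_Y0 (M x0 x1)" "prob_Y0 (M x0 x1) \<le> q0_low S obs x0"
proof -
  have "pY1D0 obs x0 x1' \<le> prob_Y0 (M x0 x1) \<and> prob_Y0 (M x0 x1) \<le> pY1 obs x0 x1'"
    if "x1' \<in> supp1 S x0" for x1'
  proof -
    have x': "(x0, x1') \<in> S"
      using that by (simp add: supp1_def)
    with compatible_pY1_given_Y0_0(2,3)[OF M x'] compatible_prob_Y0_eq[OF M x x'] show ?thesis
      by simp
  qed
  moreover have "supp1 S x0 \<noteq> {}"
    using x by (auto simp: supp1_def)
  ultimately show "q0_10_up S obs x0 \<le> prob_Y0 (M x0 x1)" "prob_Y0 (M x0 x1) \<le> q0_low S obs x0"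
    unfolding q0_10_up_def q0_low_def by (auto intro!: cSUP_least cINF_greatest)
qed

lemma compatible_prob_Y1_between:
  assumes M: "compatible S obs M" and x: "(x0, x1) \<in> S"
  shows "q1_11_up S obs x1 \<le> prob_Y1 (M x0 x1)" "prob_Y1 (M x0 x1) \<le> q1_low S obs x1"
proof -
  have "pY1D1 obs x0' x1 \<le> prob_Y1 (M x0 x1) \<and> prob_Y1 (M x0 x1) \<le> pY1 obs x0' x1"
    if "x0' \<in> supp0 S x1" for x0'
  proof -
    have x': "(x0', x1) \<in> S"
      using that by (simp add: supp0_def)
    with compatible_pY0_given_Y1_0(2,3)[OF M x'] compatible_prob_Y1_eq[OF M x x'] show ?thesis
      by simp
  qed
  moreover have "supp0 S x1 \<noteq> {}"
    using x by (auto simp: supp0_def)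
  ultimately show "q1_11_up S obs x1 \<le> prob_Y1 (M x0 x1)" "prob_Y1 (M x0 x1) \<le> q1_low S obs x1"
    unfolding q1_11_up_def q1_low_def by (auto intro!: cSUP_least cINF_greatest)
qed

lemma compatible_roy_structure:
  assumes bounds: "\<And>x0 x1. (x0, x1) \<in> S \<Longrightarrow>
      pY1D0 obs x0 x1 \<le> f0 x0 x1 \<and> f0 x0 x1 \<le> pY1 obs x0 x1 \<and>
      pY1D1 obs x0 x1 \<le> f1 x0 x1 \<and> f1 x0 x1 \<le> pY1 obs x0 x1"
    and row: "\<And>x0 x1 x1'. (x0, x1) \<in> S \<Longrightarrow> (x0, x1') \<in> S \<Longrightarrow> f0 x0 x1 = f0 x0 x1'"
    and col: "\<And>x0 x0' x1. (x0, x1) \<in> S \<Longrightarrow> (x0', x1) \<in> S \<Longrightarrow> f1 x0 x1 = f1 x0' x1"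
  shows "compatible S obs (\<lambda>x0 x1. roy_structure (obs x0 x1) (f0 x0 x1) (f1 x0 x1))"
    (is "compatible S obs ?M")
proof -
  have built: "(\<forall>y0 y1 d. (y0, y1, d) \<in> set_pmf (?M x0 x1) \<longrightarrow> roy_outcome y0 y1 d)
      \<and> map_pmf observed (?M x0 x1) = obs x0 x1
      \<and> prob_Y0 (?M x0 x1) = f0 x0 x1 \<and> prob_Y1 (?M x0 x1) = f1 x0 x1"
    if "(x0, x1) \<in> S" for x0 x1
    using roy_structure[of "obs x0 x1" "f0 x0 x1" "f1 x0 x1"] bounds[OF that]
    unfolding pY1_def pY1D0_def pY1D1_def by blast
  have "map_pmf fst (?M x0 x1) = map_pmf fst (?M x0 x1')"
    if "(x0, x1) \<in> S" "(x0, x1') \<in> S" for x0 x1 x1'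
    using built[OF that(1)] built[OF that(2)] row[OF that]
    by (intro pmf_bool_eqI) (simp add: prob_Y0_def)
  moreover have "map_pmf (fst \<circ> snd) (?M x0 x1) = map_pmf (fst \<circ> snd) (?M x0' x1)"
    if "(x0, x1) \<in> S" "(x0', x1) \<in> S" for x0 x0' x1
    using built[OF that(1)] built[OF that(2)] col[OF that]
    by (intro pmf_bool_eqI) (simp add: prob_Y1_def)
  ultimately show ?thesis
    unfolding compatible_def using built by blast
qed

lemma pY1_given_Y0_0_attains:
  assumes M0: "compatible S obs M0" and x: "(x0, x1) \<in> S"
    and t: "q0_10_up S obs x0 \<le> t" "t \<le> q0_low S obs x0"
  shows "\<exists>M. compatible S obs M \<and> pY1_given_Y0_0 M x0 x1 = (pY1 obs x0 x1 - t) / (1 - t)"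
proof -
  define f0 where "f0 = (\<lambda>a b. if a = x0 then t else prob_Y0 (M0 a b))"
  define f1 where "f1 = (\<lambda>a b. prob_Y1 (M0 a b))"
  have bounds: "pY1D0 obs a b \<le> f0 a b \<and> f0 a b \<le> pY1 obs a b \<and>
      pY1D1 obs a b \<le> f1 a b \<and> f1 a b \<le> pY1 obs a b" if ab: "(a, b) \<in> S" for a b
  proof -
    have "pY1D0 obs x0 b \<le> t" "t \<le> pY1 obs x0 b" if "a = x0"
      using ab that t pY1D0_le_q0_10_up[of b S x0 obs] q0_low_le_pY1[of b S x0 obs]
      by (auto simp: supp1_def)
    then show ?thesis
      using compatible_pY1_given_Y0_0(2,3)[OF M0 ab] compatible_pY0_given_Y1_0(2,3)[OF M0 ab]
      by (auto simp: f0_def f1_def)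
  qed
  have row: "f0 a b = f0 a b'" if "(a, b) \<in> S" "(a, b') \<in> S" for a b b'
    using compatible_prob_Y0_eq[OF M0 that] by (simp add: f0_def)
  have col: "f1 a b = f1 a' b" if "(a, b) \<in> S" "(a', b) \<in> S" for a a' b
    using compatible_prob_Y1_eq[OF M0 that] by (simp add: f1_def)
  have M: "compatible S obs (\<lambda>a b. roy_structure (obs a b) (f0 a b) (f1 a b))"
    by (rule compatible_roy_structure[OF bounds row col])
  have t_eq: "prob_Y0 (roy_structure (obs x0 x1) (f0 x0 x1) (f1 x0 x1)) = t"
    using roy_structure(3)[of "obs x0 x1"] bounds[OF x]
    unfolding pY1_def pY1D0_def pY1D1_def by (simp add: f0_def)
  show ?thesis
    using compatible_pY1_given_Y0_0(1)[OF M x] t_eq M by auto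
qed

lemma pY0_given_Y1_0_attains:
  assumes M0: "compatible S obs M0" and x: "(x0, x1) \<in> S"
    and t: "q1_11_up S obs x1 \<le> t" "t \<le> q1_low S obs x1"
  shows "\<exists>M. compatible S obs M \<and> pY0_given_Y1_0 M x0 x1 = (pY1 obs x0 x1 - t) / (1 - t)"
proof -
  define f0 where "f0 = (\<lambda>a b. prob_Y0 (M0 a b))"
  define f1 where "f1 = (\<lambda>a b. if b = x1 then t else prob_Y1 (M0 a b))"
  have bounds: "pY1D0 obs a b \<le> f0 a b \<and> f0 a b \<le> pY1 obs a b \<and>
      pY1D1 obs a b \<le> f1 a b \<and> f1 a b \<le> pY1 obs a b" if ab: "(a, b) \<in> S" for a b
  proof -
    have "pY1D1 obs a x1 \<le> t" "t \<le> pY1 obs a x1" if "b = x1"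
      using ab that t pY1D1_le_q1_11_up[of a S x1 obs] q1_low_le_pY1[of a S x1 obs]
      by (auto simp: supp0_def)
    then show ?thesis
      using compatible_pY1_given_Y0_0(2,3)[OF M0 ab] compatible_pY0_given_Y1_0(2,3)[OF M0 ab]
      by (auto simp: f0_def f1_def)
  qed
  have row: "f0 a b = f0 a b'" if "(a, b) \<in> S" "(a, b') \<in> S" for a b b'
    using compatible_prob_Y0_eq[OF M0 that] by (simp add: f0_def)
  have col: "f1 a b = f1 a' b" if "(a, b) \<in> S" "(a', b) \<in> S" for a a' b
    using compatible_prob_Y1_eq[OF M0 that] by (simp add: f1_def)
  have M: "compatible S obs (\<lambda>a b. roy_structure (obs a b) (f0 a b) (f1 a b))"
    by (rule compatible_roy_structure[OF bounds row col])
  have t_eq: "prob_Y1 (roy_structure (obs x0 x1) (f0 x0 x1) (f1 x0 x1)) = t"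
    using roy_structure(4)[of "obs x0 x1"] bounds[OF x]
    unfolding pY1_def pY1D0_def pY1D1_def by (simp add: f1_def)
  show ?thesis
    using compatible_pY0_given_Y1_0(1)[OF M x] t_eq M by auto
qed

lemma diff_divide_one_minus_antimono:
  fixes p t q :: real
  assumes "t \<le> q" "q < 1" "p \<le> 1"
  shows "(p - q) / (1 - q) \<le> (p - t) / (1 - t)"
proof -
  have "0 \<le> (q - t) * (1 - p)"
    using assms by simp
  then have "(p - q) * (1 - t) \<le> (p - t) * (1 - q)"
    by (simp add: algebra_simps)
  then show ?thesis
    using assms by (simp add: divide_simps)
qed

lemma pY1_given_Y0_0_bounds:
  assumes M: "compatible S obs M" and x: "(x0, x1) \<in> S" and q: "q0_low S obs x0 \<noteq> 1"
  defines "\<pi> \<equiv> pY1 obs x0 x1"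
  shows "(\<pi> - q0_low S obs x0) / (1 - q0_low S obs x0) \<le> pY1_given_Y0_0 M x0 x1"
    and "pY1_given_Y0_0 M x0 x1 \<le> (\<pi> - q0_10_up S obs x0) / (1 - q0_10_up S obs x0)"
proof -
  have "\<pi> \<le> 1"
    by (simp add: \<pi>_def pY1_def)
  moreover have "q0_low S obs x0 < 1"
    using q0_low_le_pY1[of x1 S x0 obs] x q \<open>\<pi> \<le> 1\<close> by (simp add: supp1_def \<pi>_def)
  moreover note compatible_prob_Y0_between[OF M x]
  ultimately show "(\<pi> - q0_low S obs x0) / (1 - q0_low S obs x0) \<le> pY1_given_Y0_0 M x0 x1"
    and "pY1_given_Y0_0 M x0 x1 \<le> (\<pi> - q0_10_up S obs x0) / (1 - q0_10_up S obs x0)"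
    unfolding compatible_pY1_given_Y0_0(1)[OF M x] \<pi>_def[symmetric]
    by (simp_all add: diff_divide_one_minus_antimono)
qed

lemma pY0_given_Y1_0_bounds:
  assumes M: "compatible S obs M" and x: "(x0, x1) \<in> S" and q: "q1_low S obs x1 \<noteq> 1"
  defines "\<pi> \<equiv> pY1 obs x0 x1"
  shows "(\<pi> - q1_low S obs x1) / (1 - q1_low S obs x1) \<le> pY0_given_Y1_0 M x0 x1"
    and "pY0_given_Y1_0 M x0 x1 \<le> (\<pi> - q1_11_up S obs x1) / (1 - q1_11_up S obs x1)"
proof -
  have "\<pi> \<le> 1"
    by (simp add: \<pi>_def pY1_def)
  moreover have "q1_low S obs x1 < 1"
    using q1_low_le_pY1[of x0 S x1 obs] x q \<open>\<pi> \<le> 1\<close> by (simp add: supp0_def \<pi>_def)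
  moreover note compatible_prob_Y1_between[OF M x]
  ultimately show "(\<pi> - q1_low S obs x1) / (1 - q1_low S obs x1) \<le> pY0_given_Y1_0 M x0 x1"
    and "pY0_given_Y1_0 M x0 x1 \<le> (\<pi> - q1_11_up S obs x1) / (1 - q1_11_up S obs x1)"
    unfolding compatible_pY0_given_Y1_0(1)[OF M x] \<pi>_def[symmetric]
    by (simp_all add: diff_divide_one_minus_antimono)
qed

theorem mainTheorem10:
  fixes S :: "('a \<times> 'b) set"
    and obs :: "'a \<Rightarrow> 'b \<Rightarrow> (bool \<times> bool) pmf"
    and M0 :: "'a \<Rightarrow> 'b \<Rightarrow> (bool \<times> bool \<times> bool) pmf"
    and x0 :: 'a and x1 :: 'b
  assumes model: "compatible S obs M0"
    and xS: "(x0, x1) \<in> S"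
    and d1: "1 - q0_low S obs x0 \<noteq> 0"
    and d2: "1 - q0_10_up S obs x0 \<noteq> 0"
    and d3: "1 - q1_low S obs x1 \<noteq> 0"
    and d4: "1 - q1_11_up S obs x1 \<noteq> 0"
  defines "\<pi> \<equiv> pY1 obs x0 x1"
  shows
    "(\<forall>M. compatible S obs M \<longrightarrow>
        (\<pi> - q0_low S obs x0) / (1 - q0_low S obs x0) \<le> pY1_given_Y0_0 M x0 x1
      \<and> pY1_given_Y0_0 M x0 x1 \<le> (\<pi> - q0_10_up S obs x0) / (1 - q0_10_up S obs x0)
      \<and> (\<pi> - q1_low S obs x1) / (1 - q1_low S obs x1) \<le> pY0_given_Y1_0 M x0 x1
      \<and> pY0_given_Y1_0 M x0 x1 \<le> (\<pi> - q1_11_up S obs x1) / (1 - q1_11_up S obs x1))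
   \<and> (\<exists>M. compatible S obs M \<and>
        pY1_given_Y0_0 M x0 x1 = (\<pi> - q0_low S obs x0) / (1 - q0_low S obs x0))
   \<and> (\<exists>M. compatible S obs M \<and>
        pY1_given_Y0_0 M x0 x1 = (\<pi> - q0_10_up S obs x0) / (1 - q0_10_up S obs x0))
   \<and> (\<exists>M. compatible S obs M \<and>
        pY0_given_Y1_0 M x0 x1 = (\<pi> - q1_low S obs x1) / (1 - q1_low S obs x1))
   \<and> (\<exists>M. compatible S obs M \<and>
        pY0_given_Y1_0 M x0 x1 = (\<pi> - q1_11_up S obs x1) / (1 - q1_11_up S obs x1))"
proof -
  have q0: "q0_10_up S obs x0 \<le> q0_low S obs x0"
    using compatible_prob_Y0_between[OF model xS] by linarith
  have q1: "q1_11_up S obs x1 \<le> q1_low S obs x1"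
    using compatible_prob_Y1_between[OF model xS] by linarith
  have "q0_low S obs x0 \<noteq> 1" "q1_low S obs x1 \<noteq> 1"
    using d1 d3 by simp_all
  note bounds = pY1_given_Y0_0_bounds[OF _ xS this(1)] pY0_given_Y1_0_bounds[OF _ xS this(2)]
  show ?thesis
    unfolding \<pi>_def
    using bounds pY1_given_Y0_0_attains[OF model xS] pY0_given_Y1_0_attains[OF model xS] q0 q1
    by auto
qed

end
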